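(* Let $\mathcal{C}$ be a $q$-ary cyclic code of length $n$ and minimum distance $d$, and let $\mathcal{L}$ be a $q_\ell$-ary cyclic code of length $n_\ell$, dimension $k_\ell$ and minimum distance $d_\ell$, where $\mathbb{F}_{q_\ell}=\mathbb{F}_{q^u}$ is an extension field of $\mathbb{F}_q$ and $\gcd(n,n_\ell)=1$. Suppose that $\mathcal{L}$ is a non-zero-locator code of $\mathcal{C}$ (as defined in the context) with associated integers $\mu\ge 2$ and $e$. Then $$d \;\ge\; d^{\ast}:=\left\lceil \frac{\mu}{d_\ell}\right\rceil .$$
   Context: A $q$-ary cyclic code $\mathcal{C}$ of length $n$ (with $\gcd(n,q)=1$, so $x^n-1$ has $n$ distinct roots) is an ideal of $\mathbb{F}_q[x]/(x^n-1)$; codewords $c=(c_0,\dots,c_{n-1})$ are identified with polynomials $c(x)=\sum_{i=0}^{n-1}c_ix^i$. Non-zero-locator code: let $\mathcal{C}$ be a $q$-ary cyclic code of length $n$ and $\mathcal{L}$ a cyclic code of length $n_\ell$ over $\mathbb{F}_{q_\ell}=\mathbb{F}_{q^u}$ (with $\gcd(n_\ell,q)=1$), with $\gcd(n,n_\ell)=1$. Let $\alpha$ be an element of multiplicative order $n$ and $\beta$ an element of multiplicative order $n_\ell$, both lying in a common finite extension field of $\mathbb{F}_q$ (e.g. $\alpha$ in $\mathbb{F}_{q^s}$, $\beta$ in $\mathbb{F}_{q_\ell^{s_\ell}}$, both contained in $\mathbb{F}_{q^r}$ with $r=\mathrm{lcm}(s,u s_\ell)$). Then $\mathcal{L}$ is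 called a non-zero-locator code of $\mathcal{C}$ if there exist an integer $\mu\ge 2$ and an integer $e$ such that for all $a(x)\in\mathcal{L}$ and all $c(x)\in\mathcal{C}$, $$\sum_{j=0}^{\infty} c(\alpha^{j+e})\,a(\beta^j)\,x^j \equiv 0 \pmod{x^{\mu-1}}$$ as formal power series, i.e. $c(\alpha^{j+e})a(\beta^j)=0$ for $j=0,\dots,\mu-2$. *)

theory Defs
  imports Complex_Main
begin

text \<open>All fields are realised as subfields of one ambient finite field of type 'a
  (the common extension F_{q^r}).\<close>

definition subfield :: "'a::field set \<Rightarrow> bool" where
  "subfield K \<longleftrightarrow> 0 \<in> K \<and> 1 \<in> K \<and>
     (\<forall>x\<in>K. \<forall>y\<in>K. x + y \<in> K \<and> x * y \<in> K) \<and>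
     (\<forall>x\<in>K. - x \<in> K) \<and> (\<forall>x\<in>K. x \<noteq> 0 \<longrightarrow> inverse x \<in> K)"

text \<open>Codewords are lists (c_0,...,c_{n-1}); a cyclic code of length n over K is a
  K-linear subspace of K^n closed under cyclic shifts (equivalently an ideal of
  K[x]/(x^n-1)); gcd(n,q)=1 is required as in the paper.\<close>

definition cyclic_code :: "'a::field set \<Rightarrow> nat \<Rightarrow> 'a list set \<Rightarrow> bool" where
  "cyclic_code K n C \<longleftrightarrow> subfield K \<and> finite K \<and> coprime n (card K) \<and>
     (\<forall>c\<in>C. length c = n \<and> set c \<subseteq> K) \<and>
     replicate n 0 \<in> C \<and>
     (\<forall>c\<in>C. \<forall>c'\<in>C. map2 (+) c c' \<in> C) \<and>
     (\<forall>s\<in>K. \<forall>c\<in>C. map (\<lambda>x. s * x) c \<in> C) \<and>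
     (\<forall>c\<in>C. rotate1 c \<in> C)"

definition weight :: "'a::zero list \<Rightarrow> nat" where
  "weight c = card {i. i < length c \<and> c ! i \<noteq> 0}"

definition min_dist :: "'a::zero list set \<Rightarrow> nat" where
  "min_dist C = Min {weight c | c. c \<in> C \<and> (\<exists>x\<in>set c. x \<noteq> 0)}"

definition cw_eval :: "'a::comm_ring_1 list \<Rightarrow> 'a \<Rightarrow> 'a" where
  "cw_eval c x = (\<Sum>i<length c. c ! i * x ^ i)"

definition has_mult_order :: "'a::monoid_mult \<Rightarrow> nat \<Rightarrow> bool" where
  "has_mult_order a n \<longleftrightarrow> n > 0 \<and> a ^ n = 1 \<and> (\<forall>k. 0 < k \<and> k < n \<longrightarrow> a ^ k \<noteq> 1)"

definition non_zero_locator ::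
  "'a::field list set \<Rightarrow> 'a list set \<Rightarrow> 'a \<Rightarrow> 'a \<Rightarrow> nat \<Rightarrow> int \<Rightarrow> bool" where
  "non_zero_locator L C \<alpha> \<beta> \<mu> e \<longleftrightarrow> \<mu> \<ge> 2 \<and>
     (\<forall>a\<in>L. \<forall>c\<in>C. \<forall>j < \<mu> - 1.
        cw_eval c (\<alpha> powi (int j + e)) * cw_eval a (\<beta> ^ j) = 0)"

end

theory Submission
  imports Defs "HOL-Number_Theory.Cong"
begin

text \<open>Restrict c and a to their supports. For every j the product
  c(\<alpha>^(j+e)) a(\<beta>^j) is then a power sum \<Sum> b_(i,l) (\<alpha>^i \<beta>^l)^j over the
  wt(c) wt(a) pairs of support indices, with all coefficients b_(i,l) non-zero.
  Since gcd(n, n_l) = 1 the nodes \<alpha>^i \<beta>^l are pairwise distinct, so a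
  Vandermonde argument shows that such a power sum cannot vanish for
  wt(c) wt(a) consecutive values of j. Hence \<mu> - 1 < wt(c) wt(a); taking c and a
  of minimum weight gives \<mu> \<le> d d_l.\<close>

lemma power_sums_eq_zero_imp_coeffs_eq_zero:
  fixes b r :: "'i \<Rightarrow> 'a::field"
  assumes "finite S" "inj_on r S" "\<forall>j<card S. (\<Sum>k\<in>S. b k * r k ^ j) = 0"
  shows "\<forall>k\<in>S. b k = 0"
  using assms
proof (induction S arbitrary: b rule: finite_induct)
  case empty
  then show ?case by simp
next
  case (insert k0 S)
  define b' where "b' k = b k * (r k - r k0)" for k
  have card: "card (insert k0 S) = Suc (card S)"
    using insert.hyps by simp
  text \<open>Eliminating the node r k0: multiply the j-th sum by r k0 and subtract it
    from the (j+1)-th.\<close>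
  have "(\<Sum>k\<in>S. b' k * r k ^ j) = 0" if j: "j < card S" for j
  proof -
    have "(\<Sum>k\<in>S. b' k * r k ^ j) = (\<Sum>k\<in>S. b k * r k ^ Suc j - r k0 * (b k * r k ^ j))"
      by (rule sum.cong) (auto simp: b'_def algebra_simps)
    also have "\<dots> = (\<Sum>k\<in>insert k0 S. b k * r k ^ Suc j)
                      - r k0 * (\<Sum>k\<in>insert k0 S. b k * r k ^ j)"
      using insert.hyps by (simp add: sum_subtractf sum_distrib_left algebra_simps)
    also have "\<dots> = 0"
      using insert.prems(2) card j by auto
    finally show ?thesis .
  qed
  moreover have "inj_on r S"
    using insert.prems(1) by (rule inj_on_subset) auto
  ultimately have "\<forall>k\<in>S. b' k = 0"
    using insert.IH by blast
  moreover have "\<forall>k\<in>S. r k \<noteq> r k0"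
    using insert.prems(1) insert.hyps unfolding inj_on_def by blast
  ultimately have bS: "\<forall>k\<in>S. b k = 0"
    by (auto simp: b'_def)
  moreover have "(\<Sum>k\<in>insert k0 S. b k * r k ^ 0) = 0"
    using insert.prems(2) card by auto
  ultimately show ?case
    using insert.hyps by simp
qed

lemma has_mult_order_nonzero: "has_mult_order (a::'a::field) n \<Longrightarrow> a \<noteq> 0"
  unfolding has_mult_order_def by (metis power_0_left zero_neq_one)

lemma has_mult_order_power_mod:
  assumes "has_mult_order (a::'a::monoid_mult) n"
  shows "a ^ x = a ^ (x mod n)"
proof -
  have "a ^ x = a ^ (n * (x div n) + x mod n)"
    by simp
  also have "\<dots> = (a ^ n) ^ (x div n) * a ^ (x mod n)"
    by (simp only: power_add power_mult)
  finally show ?thesis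
    using assms by (simp add: has_mult_order_def)
qed

lemma has_mult_order_power_inj:
  assumes ord: "has_mult_order (a::'a::field) n" and "x < n" "y < n" "a ^ x = a ^ y"
  shows "x = y"
proof -
  have "x = y" if xy: "x < y" "y < n" "a ^ x = a ^ y" for x y
  proof (rule ccontr)
    have "a ^ y = a ^ x * a ^ (y - x)"
      using xy by (metis le_add_diff_inverse less_imp_le power_add)
    then have "a ^ (y - x) = 1"
      using xy has_mult_order_nonzero[OF ord] by simp
    moreover have "0 < y - x" "y - x < n"
      using xy by auto
    ultimately show False
      using ord by (simp add: has_mult_order_def)
  qed
  then show ?thesis
    using assms by (metis linorder_neq_iff)
qed

lemma has_mult_order_power_eq_imp_cong:
  assumes ord: "has_mult_order (a::'a::field) n" and "a ^ x = a ^ y"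
  shows "[x = y] (mod n)"
proof -
  have "n > 0"
    using ord by (simp add: has_mult_order_def)
  then show ?thesis
    unfolding cong_def
    using assms has_mult_order_power_mod[OF ord] by (intro has_mult_order_power_inj[OF ord]) auto
qed

lemma inj_on_products_of_coprime_orders:
  fixes \<alpha> \<beta> :: "'a::field"
  assumes ord\<alpha>: "has_mult_order \<alpha> n" and ord\<beta>: "has_mult_order \<beta> m" and "coprime n m"
  shows "inj_on (\<lambda>(i, l). \<alpha> ^ i * \<beta> ^ l) ({..<n} \<times> {..<m})"
proof (rule inj_onI, clarsimp)
  fix i l i' l'
  assume i: "i < n" "i' < n" and l: "l < m" "l' < m"
    and eq: "\<alpha> ^ i * \<beta> ^ l = \<alpha> ^ i' * \<beta> ^ l'"
  have "\<beta> ^ m = 1"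
    using ord\<beta> by (simp add: has_mult_order_def)
  with arg_cong[OF eq, of "\<lambda>x. x ^ m"] have "\<alpha> ^ (i * m) = \<alpha> ^ (i' * m)"
    by (simp add: power_mult_distrib flip: power_mult) (simp add: power_mult mult.commute[of _ m])
  then have "[i * m = i' * m] (mod n)"
    by (rule has_mult_order_power_eq_imp_cong[OF ord\<alpha>])
  then have "[i = i'] (mod n)"
    using \<open>coprime n m\<close> by (simp add: cong_mult_rcancel_nat coprime_commute)
  then have "i = i'"
    using i by (simp add: cong_def)
  moreover from this have "l = l'"
    using eq l has_mult_order_nonzero[OF ord\<alpha>] has_mult_order_power_inj[OF ord\<beta>] by simp
  ultimately show "i = i' \<and> l = l'" ..
qed

definition support :: "'a::zero list \<Rightarrow> nat set" where
  "support c = {i. i < length c \<and> c ! i \<noteq> 0}"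

lemma finite_support [simp]: "finite (support c)"
  unfolding support_def by simp

lemma support_subset_lessThan: "support c \<subseteq> {..<length c}"
  unfolding support_def by auto

lemma weight_eq_card_support: "weight c = card (support c)"
  unfolding weight_def support_def ..

lemma support_nonempty: "\<exists>x\<in>set c. x \<noteq> 0 \<Longrightarrow> support c \<noteq> {}"
  unfolding support_def by (auto simp: in_set_conv_nth)

lemma weight_pos: "\<exists>x\<in>set c. x \<noteq> 0 \<Longrightarrow> weight c > 0"
  by (simp add: weight_eq_card_support card_gt_0_iff support_nonempty)

lemma weight_le_length: "weight c \<le> length c"
  unfolding weight_eq_card_support
  using card_mono[OF _ support_subset_lessThan] by simp

lemma min_dist_attained:
  assumes "\<forall>c\<in>C. length c = n" and "\<exists>c\<in>C. \<exists>x\<in>set c. x \<noteq> (0::'a::zero)"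
  obtains c where "c \<in> C" "\<exists>x\<in>set c. x \<noteq> 0" "weight c = min_dist C"
proof -
  let ?W = "{weight c | c. c \<in> C \<and> (\<exists>x\<in>set c. x \<noteq> 0)}"
  have "?W \<subseteq> {..n}"
    using assms(1) weight_le_length by fastforce
  then have "finite ?W"
    by (rule finite_subset) simp
  moreover have "?W \<noteq> {}"
    using assms(2) by blast
  ultimately have "min_dist C \<in> ?W"
    unfolding min_dist_def by (rule Min_in)
  then obtain c where "c \<in> C" "\<exists>x\<in>set c. x \<noteq> 0" "min_dist C = weight c"
    by blast
  then show ?thesis
    using that by simp
qed

lemma cw_eval_mult_eq_sum_support:
  fixes c :: "'a::field list"
  shows "cw_eval c (x * y) = (\<Sum>i\<in>support c. c ! i * y ^ i * x ^ i)"
proof -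
  have "cw_eval c (x * y) = (\<Sum>i<length c. c ! i * y ^ i * x ^ i)"
    unfolding cw_eval_def by (rule sum.cong) (auto simp: power_mult_distrib)
  also have "\<dots> = (\<Sum>i\<in>support c. c ! i * y ^ i * x ^ i)"
    by (rule sum.mono_neutral_right) (auto simp: support_def)
  finally show ?thesis .
qed

lemma cw_eval_product_eq_power_sum:
  fixes c a :: "'a::field list"
  shows "cw_eval c (\<alpha> ^ j * \<gamma>) * cw_eval a (\<beta> ^ j * \<delta>)
    = (\<Sum>(i, l)\<in>support c \<times> support a.
         (c ! i * \<gamma> ^ i * (a ! l * \<delta> ^ l)) * (\<alpha> ^ i * \<beta> ^ l) ^ j)"
  unfolding cw_eval_mult_eq_sum_support sum_product sum.cartesian_product
  by (rule sum.cong) (auto simp: algebra_simps simp flip: power_mult)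

lemma weight_mult_ge_of_vanishing_products:
  fixes \<alpha> \<beta> \<gamma> \<delta> :: "'a::field" and c a :: "'a list"
  assumes ord\<alpha>: "has_mult_order \<alpha> n" and ord\<beta>: "has_mult_order \<beta> m" and "coprime n m"
    and "length c = n" and "length a = m"
    and "\<exists>x\<in>set c. x \<noteq> 0" and "\<exists>x\<in>set a. x \<noteq> 0"
    and "\<gamma> \<noteq> 0" and "\<delta> \<noteq> 0"
    and vanish: "\<forall>j<N. cw_eval c (\<alpha> ^ j * \<gamma>) * cw_eval a (\<beta> ^ j * \<delta>) = 0"
  shows "N < weight c * weight a"
proof (rule ccontr)
  assume "\<not> N < weight c * weight a"
  define S where "S = support c \<times> support a"
  define b where "b = (\<lambda>(i, l). c ! i * \<gamma> ^ i * (a ! l * \<delta> ^ l))"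
  define r where "r = (\<lambda>(i::nat, l::nat). \<alpha> ^ i * \<beta> ^ l)"
  have "card S = weight c * weight a"
    by (simp add: S_def weight_eq_card_support card_cartesian_product)
  then have "\<forall>j<card S. (\<Sum>k\<in>S. b k * r k ^ j) = 0"
    using vanish \<open>\<not> N < weight c * weight a\<close>
    by (simp add: cw_eval_product_eq_power_sum S_def b_def r_def case_prod_unfold)
  moreover have "inj_on r S"
    unfolding r_def S_def
    by (rule inj_on_subset[OF inj_on_products_of_coprime_orders[OF ord\<alpha> ord\<beta> \<open>coprime n m\<close>]])
      (use support_subset_lessThan[of c] support_subset_lessThan[of a] assms(4,5) in auto)
  ultimately have "\<forall>k\<in>S. b k = 0"
    using power_sums_eq_zero_imp_coeffs_eq_zero[of S r b] by (simp add: S_def)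
  moreover obtain i l where "i \<in> support c" "l \<in> support a"
    using support_nonempty assms(6,7) by blast
  ultimately show False
    using \<open>\<gamma> \<noteq> 0\<close> \<open>\<delta> \<noteq> 0\<close> by (auto simp: S_def b_def support_def)
qed

theorem theorem2:
  fixes K Kl :: "'a::{field,finite} set"
    and C L :: "'a list set"
    and n nl \<mu> :: nat and e :: int and \<alpha> \<beta> :: 'a
  assumes "subfield K" and "subfield Kl" and "K \<subseteq> Kl"
    and "cyclic_code K n C" and "cyclic_code Kl nl L"
    and "coprime n nl"
    and "\<exists>c\<in>C. \<exists>x\<in>set c. x \<noteq> 0"
    and "\<exists>a\<in>L. \<exists>x\<in>set a. x \<noteq> 0"
    and "has_mult_order \<alpha> n" and "has_mult_order \<beta> nl"
    and "non_zero_locator L C \<alpha> \<beta> \<mu> e"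
  shows "int (min_dist C) \<ge> ceiling (real \<mu> / real (min_dist L))"
proof -
  have lengths: "\<forall>c\<in>C. length c = n" "\<forall>a\<in>L. length a = nl"
    using assms(4,5) by (simp_all add: cyclic_code_def)
  obtain c where c: "c \<in> C" "\<exists>x\<in>set c. x \<noteq> 0" "weight c = min_dist C"
    using min_dist_attained[OF lengths(1) assms(7)] by blast
  obtain a where a: "a \<in> L" "\<exists>x\<in>set a. x \<noteq> 0" "weight a = min_dist L"
    using min_dist_attained[OF lengths(2) assms(8)] by blast
  have "\<alpha> powi (int j + e) = \<alpha> ^ j * \<alpha> powi e" for j
    using has_mult_order_nonzero[OF assms(9)] by (simp add: power_int_add)
  then have vanish: "\<forall>j<\<mu> - 1. cw_eval c (\<alpha> ^ j * \<alpha> powi e) * cw_eval a (\<beta> ^ j * 1) = 0"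
    using assms(11) c(1) a(1) unfolding non_zero_locator_def by simp
  have "\<mu> - 1 < weight c * weight a"
    using lengths a c has_mult_order_nonzero[OF assms(9)] vanish
    by (intro weight_mult_ge_of_vanishing_products[OF assms(9,10,6), where \<gamma>="\<alpha> powi e" and \<delta>=1])
      auto
  then have "real \<mu> \<le> real (min_dist C) * real (min_dist L)"
    using a(3) c(3) by (simp flip: of_nat_mult)
  moreover have "min_dist L > 0"
    using weight_pos[OF a(2)] a(3) by simp
  ultimately show ?thesis
    by (simp add: ceiling_le_iff divide_le_eq)
qed

end
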